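(* Let $R$ be a number ring and $I$ an ideal of $R$. For every integer $d\geq 2$ the following are equivalent: (1) the $R$-ideal $I$ can be generated by $d$ elements; (2) for every maximal ideal $\mathfrak p$ of $R$, the $R_{\mathfrak p}$-ideal $I_{\mathfrak p}$ can be generated by $d$ elements.
   Context: A number ring is a subring of a number field (a finite extension of $\mathbb{Q}$). $R_{\mathfrak p}$, $I_{\mathfrak p}$ denote localizations at $\mathfrak p$. *)

theory Defs
  imports Complex_Main
begin

text \<open>Every number field embeds into the complex numbers, so number rings are
  modelled (up to isomorphism) as subrings of subfields of the complex numbers
  of finite dimension over the rationals.\<close>

definition subring_c :: "complex set \<Rightarrow> bool" where
  "subring_c R \<longleftrightarrow> 1 \<in> R \<and> (\<forall>x\<in>R. \<forall>y\<in>R. x + y \<in> R \<and> x - y \<in> R \<and> x * y \<in> R)"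

definition subfield_c :: "complex set \<Rightarrow> bool" where
  "subfield_c K \<longleftrightarrow> subring_c K \<and> (\<forall>x\<in>K. x \<noteq> 0 \<longrightarrow> inverse x \<in> K)"

definition number_field_c :: "complex set \<Rightarrow> bool" where
  "number_field_c K \<longleftrightarrow> subfield_c K \<and>
     (\<exists>B. finite B \<and> B \<subseteq> K \<and> (\<forall>x\<in>K. \<exists>c. x = (\<Sum>b\<in>B. of_rat (c b) * b)))"

definition number_ring :: "complex set \<Rightarrow> bool" where
  "number_ring R \<longleftrightarrow> subring_c R \<and> (\<exists>K. number_field_c K \<and> R \<subseteq> K)"

definition ideal_c :: "complex set \<Rightarrow> complex set \<Rightarrow> bool" where
  "ideal_c R I \<longleftrightarrow> I \<subseteq> R \<and> 0 \<in> I \<and> (\<forall>x\<in>I. \<forall>y\<in>I. x + y \<in> I)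
      \<and> (\<forall>r\<in>R. \<forall>x\<in>I. r * x \<in> I)"

definition maximal_ideal_c :: "complex set \<Rightarrow> complex set \<Rightarrow> bool" where
  "maximal_ideal_c R P \<longleftrightarrow> ideal_c R P \<and> P \<noteq> R \<and>
     (\<forall>J. ideal_c R J \<and> P \<subseteq> J \<longrightarrow> J = P \<or> J = R)"

definition gen_by :: "complex set \<Rightarrow> complex set \<Rightarrow> nat \<Rightarrow> bool" where
  "gen_by R I d \<longleftrightarrow> (\<exists>x :: nat \<Rightarrow> complex.
      I = {(\<Sum>i<d. r i * x i) | r. \<forall>i<d. r i \<in> R})"

definition loc :: "complex set \<Rightarrow> complex set \<Rightarrow> complex set \<Rightarrow> complex set" where
  "loc R P A = {a / s | a s. a \<in> A \<and> s \<in> R \<and> s \<notin> P}"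

end

theory Submission
  imports Defs "HOL-Computational_Algebra.Primes"
begin

(* Localizing a generating family gives (1) \<Longrightarrow> (2). Conversely, take n \<noteq> 0 in I. Only finitely
   many maximal ideals contain n: n divides a nonzero integer N in R, every maximal ideal
   containing n contains a prime factor p of N, and at most [K : \<rat>] maximal ideals contain p. By the Chinese
   remainder theorem the local generators at these finitely many maximal ideals P are glued to
   elements X 0, ..., X (d - 1) of I congruent to them modulo P I, so by Nakayama's lemma they
   generate I at P. At every other maximal ideal I is locally the whole ring, and the gluing is
   arranged so that X 0 or X 1 is a unit there; this is where d \<ge> 2 is used. Finally, an ideal
   of R that agrees with I at every maximal ideal is I. *)

lemma subring_c_one: "subring_c R \<Longrightarrow> 1 \<in> R"
  and subring_c_add: "subring_c R \<Longrightarrow> x \<in> R \<Longrightarrow> y \<in> R \<Longrightarrow> x + y \<in> R"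
  and subring_c_diff: "subring_c R \<Longrightarrow> x \<in> R \<Longrightarrow> y \<in> R \<Longrightarrow> x - y \<in> R"
  and subring_c_mult: "subring_c R \<Longrightarrow> x \<in> R \<Longrightarrow> y \<in> R \<Longrightarrow> x * y \<in> R"
  by (simp_all add: subring_c_def)

lemma subring_c_zero: "subring_c R \<Longrightarrow> 0 \<in> R"
  by (metis subring_c_diff subring_c_one diff_self)

lemma subring_c_uminus: "subring_c R \<Longrightarrow> x \<in> R \<Longrightarrow> - x \<in> R"
  by (metis subring_c_diff subring_c_zero diff_0)

lemma subring_c_of_int: "subring_c R \<Longrightarrow> of_int k \<in> R"
proof -
  assume R: "subring_c R"
  have "of_nat n \<in> R" for n
    by (induction n) (auto simp: R subring_c_zero subring_c_one subring_c_add)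
  then show ?thesis
    by (cases k rule: int_cases) (auto simp: R subring_c_uminus simp del: of_nat_Suc)
qed

lemma subring_c_sum: "subring_c R \<Longrightarrow> (\<And>i. i \<in> F \<Longrightarrow> f i \<in> R) \<Longrightarrow> sum f F \<in> R"
  by (induction F rule: infinite_finite_induct) (auto simp: subring_c_zero subring_c_add)

lemma subring_c_prod: "subring_c R \<Longrightarrow> (\<And>i. i \<in> F \<Longrightarrow> f i \<in> R) \<Longrightarrow> prod f F \<in> R"
  by (induction F rule: infinite_finite_induct) (auto simp: subring_c_one subring_c_mult)

lemma subring_c_power: "subring_c R \<Longrightarrow> x \<in> R \<Longrightarrow> x ^ n \<in> R"
  by (induction n) (auto simp: subring_c_one subring_c_mult)

lemma ideal_c_subset: "ideal_c R I \<Longrightarrow> I \<subseteq> R"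
  and ideal_c_zero: "ideal_c R I \<Longrightarrow> 0 \<in> I"
  and ideal_c_add: "ideal_c R I \<Longrightarrow> x \<in> I \<Longrightarrow> y \<in> I \<Longrightarrow> x + y \<in> I"
  and ideal_c_mult_left: "ideal_c R I \<Longrightarrow> r \<in> R \<Longrightarrow> x \<in> I \<Longrightarrow> r * x \<in> I"
  by (auto simp: ideal_c_def)

lemma ideal_c_mult_right: "ideal_c R I \<Longrightarrow> r \<in> R \<Longrightarrow> x \<in> I \<Longrightarrow> x * r \<in> I"
  by (metis ideal_c_mult_left mult.commute)

lemma ideal_c_uminus: "subring_c R \<Longrightarrow> ideal_c R I \<Longrightarrow> x \<in> I \<Longrightarrow> - x \<in> I"
  using ideal_c_mult_left[of R I "-1" x] subring_c_uminus[OF _ subring_c_one] by auto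

lemma ideal_c_sum: "ideal_c R I \<Longrightarrow> (\<And>i. i \<in> F \<Longrightarrow> f i \<in> I) \<Longrightarrow> sum f F \<in> I"
  by (induction F rule: infinite_finite_induct) (auto simp: ideal_c_zero ideal_c_add)

lemma ideal_c_eq_if_one_mem: "ideal_c R I \<Longrightarrow> 1 \<in> I \<Longrightarrow> I = R"
  by (auto simp: ideal_c_def) (metis mult.right_neutral)

definition submodule_c :: "complex set \<Rightarrow> complex set \<Rightarrow> bool" where
  "submodule_c A N \<longleftrightarrow> 0 \<in> N \<and> (\<forall>x\<in>N. \<forall>y\<in>N. x + y \<in> N) \<and> (\<forall>a\<in>A. \<forall>x\<in>N. a * x \<in> N)"

lemma submodule_c_zero: "submodule_c A N \<Longrightarrow> 0 \<in> N"
  and submodule_c_add: "submodule_c A N \<Longrightarrow> x \<in> N \<Longrightarrow> y \<in> N \<Longrightarrow> x + y \<in> N"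
  and submodule_c_mult: "submodule_c A N \<Longrightarrow> a \<in> A \<Longrightarrow> x \<in> N \<Longrightarrow> a * x \<in> N"
  by (simp_all add: submodule_c_def)

lemma submodule_c_self: "subring_c A \<Longrightarrow> submodule_c A A"
  by (simp add: submodule_c_def subring_c_zero subring_c_add subring_c_mult)

lemma ideal_c_iff_submodule_c: "ideal_c R I \<longleftrightarrow> submodule_c R I \<and> I \<subseteq> R"
  by (auto simp: submodule_c_def ideal_c_def)

lemma ideal_c_submodule_c: "ideal_c R I \<Longrightarrow> submodule_c R I"
  by (simp add: ideal_c_iff_submodule_c)

lemma submodule_c_add_multiples:
  assumes N: "submodule_c A N" and M: "submodule_c A M"
  shows "submodule_c A {a + q * v | a q. a \<in> N \<and> q \<in> M}"
  unfolding submodule_c_def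
proof (intro conjI ballI)
  show "0 \<in> {a + q * v | a q. a \<in> N \<and> q \<in> M}"
    using submodule_c_zero[OF N] submodule_c_zero[OF M] by force
next
  fix x y assume "x \<in> {a + q * v | a q. a \<in> N \<and> q \<in> M}" "y \<in> {a + q * v | a q. a \<in> N \<and> q \<in> M}"
  then obtain a q a' q' where "x = a + q * v" "y = a' + q' * v" "a \<in> N" "a' \<in> N" "q \<in> M" "q' \<in> M"
    by blast
  moreover from this have "x + y = (a + a') + (q + q') * v" by (simp add: algebra_simps)
  ultimately show "x + y \<in> {a + q * v | a q. a \<in> N \<and> q \<in> M}"
    using submodule_c_add[OF N] submodule_c_add[OF M] by blast
next
  fix t x assume t: "t \<in> A" and "x \<in> {a + q * v | a q. a \<in> N \<and> q \<in> M}"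
  then obtain a q where "x = a + q * v" "a \<in> N" "q \<in> M" by blast
  moreover from this have "t * x = t * a + (t * q) * v" by (simp add: algebra_simps)
  ultimately show "t * x \<in> {a + q * v | a q. a \<in> N \<and> q \<in> M}"
    using submodule_c_mult[OF N t] submodule_c_mult[OF M t] by blast
qed

section \<open>Maximal ideals\<close>

lemma maximal_ideal_c_ideal: "maximal_ideal_c R P \<Longrightarrow> ideal_c R P"
  by (simp add: maximal_ideal_c_def)

lemma maximal_ideal_c_one_notin: "maximal_ideal_c R P \<Longrightarrow> 1 \<notin> P"
  using ideal_c_eq_if_one_mem maximal_ideal_c_def by blast

lemma maximal_ideal_c_nonzero: "maximal_ideal_c R P \<Longrightarrow> s \<notin> P \<Longrightarrow> s \<noteq> 0"
  using ideal_c_zero maximal_ideal_c_ideal by blast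

lemma maximal_ideal_c_comaximal:
  assumes R: "subring_c R" and P: "maximal_ideal_c R P" and s: "s \<in> R" "s \<notin> P"
  obtains p r where "p \<in> P" "r \<in> R" "1 = p + r * s"
proof -
  have PI: "ideal_c R P" using P by (rule maximal_ideal_c_ideal)
  define J where "J = {p + r * s | p r. p \<in> P \<and> r \<in> R}"
  have "ideal_c R J"
    unfolding ideal_c_iff_submodule_c J_def
  proof
    show "submodule_c R {p + r * s | p r. p \<in> P \<and> r \<in> R}"
      using submodule_c_add_multiples[OF ideal_c_submodule_c[OF PI] submodule_c_self[OF R]] .
    show "{p + r * s | p r. p \<in> P \<and> r \<in> R} \<subseteq> R"
      using R s ideal_c_subset[OF PI] by (auto intro!: subring_c_add subring_c_mult)
  qed
  moreover have "P \<subseteq> J" "s \<in> J"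
    unfolding J_def using subring_c_zero[OF R] subring_c_one[OF R] ideal_c_zero[OF PI] by force+
  ultimately have "J = R"
    using P s unfolding maximal_ideal_c_def by blast
  then have "1 \<in> J" using subring_c_one[OF R] by simp
  then show thesis
    using that unfolding J_def by auto
qed

lemma maximal_ideal_c_mult_notin:
  assumes R: "subring_c R" and P: "maximal_ideal_c R P"
    and s: "s \<in> R" "s \<notin> P" and t: "t \<in> R" "t \<notin> P"
  shows "s * t \<notin> P"
proof
  assume st: "s * t \<in> P"
  obtain p r where "p \<in> P" "r \<in> R" "1 = p + r * s"
    using maximal_ideal_c_comaximal[OF R P s] .
  then have "t * p \<in> P" "r * (s * t) \<in> P"
    using maximal_ideal_c_ideal[OF P] st t by (auto intro: ideal_c_mult_left ideal_c_mult_right)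
  moreover have "t = t * p + r * (s * t)"
    using \<open>1 = p + r * s\<close> by (metis distrib_left mult.left_commute mult_1_right)
  ultimately have "t \<in> P" using ideal_c_add[OF maximal_ideal_c_ideal[OF P]] by metis
  then show False using t by simp
qed

lemma maximal_ideal_c_coprime:
  assumes R: "subring_c R" and P: "maximal_ideal_c R P" and Q: "maximal_ideal_c R Q" and "P \<noteq> Q"
  obtains b where "b \<in> Q" "1 - b \<in> P"
proof -
  have "\<not> Q \<subseteq> P"
    using P Q \<open>P \<noteq> Q\<close> unfolding maximal_ideal_c_def by blast
  then obtain s where s: "s \<in> Q" "s \<notin> P" by blast
  then have "s \<in> R" using ideal_c_subset[OF maximal_ideal_c_ideal[OF Q]] by blast
  obtain p r where "p \<in> P" "r \<in> R" "1 = p + r * s"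
    using maximal_ideal_c_comaximal[OF R P \<open>s \<in> R\<close> s(2)] .
  moreover have "r * s \<in> Q" using ideal_c_mult_left[OF maximal_ideal_c_ideal[OF Q] \<open>r \<in> R\<close> s(1)] .
  ultimately show thesis using that[of "r * s"] by (metis add_diff_cancel_right')
qed

lemma ideal_c_one_minus_prod:
  assumes P: "ideal_c R P" and b: "\<And>Q. Q \<in> F \<Longrightarrow> b Q \<in> R \<and> 1 - b Q \<in> P"
  shows "1 - prod b F \<in> P"
  using b
proof (induction F rule: infinite_finite_induct)
  case (insert Q F)
  have "1 - prod b (insert Q F) = (1 - b Q) + b Q * (1 - prod b F)"
    using insert.hyps by (simp add: algebra_simps)
  also have "\<dots> \<in> P"
    using insert.prems insert.IH by (auto intro!: ideal_c_add[OF P] ideal_c_mult_left[OF P])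
  finally show ?case .
qed (use ideal_c_zero[OF P] in simp_all)

lemma maximal_ideals_c_crt:
  assumes R: "subring_c R" and T: "finite T" "\<And>P. P \<in> T \<Longrightarrow> maximal_ideal_c R P"
  obtains E where "\<And>P. P \<in> T \<Longrightarrow> E P \<in> R" "\<And>P. P \<in> T \<Longrightarrow> 1 - E P \<in> P"
    "\<And>P Q. P \<in> T \<Longrightarrow> Q \<in> T \<Longrightarrow> Q \<noteq> P \<Longrightarrow> E P \<in> Q"
proof -
  have "\<exists>b. b \<in> Q \<and> 1 - b \<in> P" if "P \<in> T" "Q \<in> T" "Q \<noteq> P" for P Q
    using maximal_ideal_c_coprime[OF R T(2) T(2)] that by metis
  then obtain b where b: "\<And>P Q. P \<in> T \<Longrightarrow> Q \<in> T \<Longrightarrow> Q \<noteq> P \<Longrightarrow> b P Q \<in> Q \<and> 1 - b P Q \<in> P"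
    by metis
  have bR: "b P Q \<in> R" if "P \<in> T" "Q \<in> T" "Q \<noteq> P" for P Q
    using b[OF that] ideal_c_subset[OF maximal_ideal_c_ideal[OF T(2)[OF that(2)]]] by blast
  define E where "E P = prod (b P) (T - {P})" for P
  show thesis
  proof (rule that)
    show "E P \<in> R" if "P \<in> T" for P
      unfolding E_def using bR that by (intro subring_c_prod[OF R]) auto
    show "1 - E P \<in> P" if "P \<in> T" for P
      unfolding E_def using b bR that
      by (intro ideal_c_one_minus_prod[OF maximal_ideal_c_ideal[OF T(2)[OF that]]]) auto
    show "E P \<in> Q" if "P \<in> T" "Q \<in> T" "Q \<noteq> P" for P Q
    proof -
      have "E P = b P Q * prod (b P) (T - {P} - {Q})"
        unfolding E_def using T(1) that by (simp add: prod.remove)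
      moreover have "prod (b P) (T - {P} - {Q}) \<in> R"
        using bR that by (intro subring_c_prod[OF R]) auto
      ultimately show ?thesis
        using b[OF that] ideal_c_mult_right[OF maximal_ideal_c_ideal[OF T(2)[OF that(2)]]] by metis
    qed
  qed
qed

lemma ideal_c_Union_chain:
  assumes "Ch \<noteq> {}" and ideals: "\<And>J. J \<in> Ch \<Longrightarrow> ideal_c R J"
    and chain: "\<And>X Y. X \<in> Ch \<Longrightarrow> Y \<in> Ch \<Longrightarrow> X \<subseteq> Y \<or> Y \<subseteq> X"
  shows "ideal_c R (\<Union>Ch)"
  unfolding ideal_c_def
proof (intro conjI ballI)
  show "\<Union>Ch \<subseteq> R" "0 \<in> \<Union>Ch"
    using ideals \<open>Ch \<noteq> {}\<close> unfolding ideal_c_def by blast+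
next
  fix x y assume "x \<in> \<Union>Ch" "y \<in> \<Union>Ch"
  then obtain X Y where XY: "X \<in> Ch" "Y \<in> Ch" "x \<in> X" "y \<in> Y" by blast
  then have "x \<in> X \<union> Y" "y \<in> X \<union> Y" "X \<union> Y \<in> Ch"
    using chain[OF XY(1,2)] by (auto simp: sup_absorb1 sup_absorb2)
  then show "x + y \<in> \<Union>Ch" using ideals ideal_c_add by blast
next
  fix r x assume "r \<in> R" "x \<in> \<Union>Ch"
  then show "r * x \<in> \<Union>Ch" using ideals ideal_c_mult_left by blast
qed

lemma maximal_ideal_c_exists:
  assumes R: "subring_c R" and C: "ideal_c R C" "1 \<notin> C"
  obtains P where "maximal_ideal_c R P" "C \<subseteq> P"
proof -
  define F where "F = {J. ideal_c R J \<and> C \<subseteq> J \<and> 1 \<notin> J}"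
  have "\<Union>Ch \<in> F" if "Ch \<noteq> {}" and "subset.chain F Ch" for Ch
  proof -
    have "Ch \<subseteq> F" and "\<And>X Y. X \<in> Ch \<Longrightarrow> Y \<in> Ch \<Longrightarrow> X \<subseteq> Y \<or> Y \<subseteq> X"
      using \<open>subset.chain F Ch\<close> unfolding subset.chain_def by auto
    then show ?thesis
      using ideal_c_Union_chain[OF \<open>Ch \<noteq> {}\<close>] \<open>Ch \<noteq> {}\<close> unfolding F_def by blast
  qed
  moreover have "C \<in> F" using C unfolding F_def by blast
  ultimately obtain M where M: "M \<in> F" "\<And>X. X \<in> F \<Longrightarrow> M \<subseteq> X \<Longrightarrow> X = M"
    using subset_Zorn_nonempty[of F] by blast
  have "maximal_ideal_c R M"
    unfolding maximal_ideal_c_def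
  proof (intro conjI allI impI)
    show "ideal_c R M" "M \<noteq> R"
      using M(1) subring_c_one[OF R] unfolding F_def by auto
    fix J assume J: "ideal_c R J \<and> M \<subseteq> J"
    then show "J = M \<or> J = R"
      using M ideal_c_eq_if_one_mem unfolding F_def by blast
  qed
  then show thesis using that M(1) unfolding F_def by blast
qed

text \<open>The annihilator of z modulo J lies in no maximal ideal, so it contains 1.\<close>

lemma ideal_c_mem_if_locally_mem:
  assumes R: "subring_c R" and J: "ideal_c R J" and z: "z \<in> R"
    and loc: "\<And>P. maximal_ideal_c R P \<Longrightarrow> \<exists>s\<in>R - P. s * z \<in> J"
  shows "z \<in> J"
proof (rule ccontr)
  assume "z \<notin> J"
  define C where "C = {r \<in> R. r * z \<in> J}"
  have "ideal_c R C"
    unfolding ideal_c_def C_def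
    using J R z subring_c_zero[OF R] ideal_c_zero[OF J] subring_c_add[OF R] subring_c_mult[OF R]
    by (auto simp: distrib_right mult.assoc intro: ideal_c_add[OF J] ideal_c_mult_left[OF J])
  moreover have "1 \<notin> C" using \<open>z \<notin> J\<close> unfolding C_def by simp
  ultimately obtain P where "maximal_ideal_c R P" "C \<subseteq> P"
    using maximal_ideal_c_exists[OF R] by blast
  then show False using loc unfolding C_def by blast
qed

definition span_c :: "complex set \<Rightarrow> (nat \<Rightarrow> complex) \<Rightarrow> nat \<Rightarrow> complex set" where
  "span_c A x d = {(\<Sum>i<d. r i * x i) | r. \<forall>i<d. r i \<in> A}"

lemma gen_by_iff_span_c: "gen_by R I d \<longleftrightarrow> (\<exists>x. I = span_c R x d)"
  by (simp add: gen_by_def span_c_def)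

lemma span_c_memI: "(\<And>i. i < d \<Longrightarrow> r i \<in> A) \<Longrightarrow> (\<Sum>i<d. r i * x i) \<in> span_c A x d"
  unfolding span_c_def by blast

lemma span_c_subsetI:
  assumes "0 \<in> G" "\<And>u v. u \<in> G \<Longrightarrow> v \<in> G \<Longrightarrow> u + v \<in> G"
    and "\<And>i r. i < d \<Longrightarrow> r \<in> A \<Longrightarrow> r * x i \<in> G"
  shows "span_c A x d \<subseteq> G"
proof
  fix z assume "z \<in> span_c A x d"
  then obtain r where "z = (\<Sum>i<d. r i * x i)" "\<forall>i<d. r i \<in> A"
    unfolding span_c_def by blast
  moreover have "(\<Sum>i\<in>F. r i * x i) \<in> G" if "F \<subseteq> {..<d}" "\<forall>i<d. r i \<in> A" for F
    using that by (induction F rule: infinite_finite_induct) (auto simp: assms)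
  ultimately show "z \<in> G" by blast
qed

lemma span_c_subset:
  "submodule_c A N \<Longrightarrow> (\<And>i. i < d \<Longrightarrow> x i \<in> N) \<Longrightarrow> span_c A x d \<subseteq> N"
  by (rule span_c_subsetI) (auto simp: submodule_c_zero submodule_c_add submodule_c_mult)

lemma span_c_mult:
  assumes M: "submodule_c A M" and p: "p \<in> M" and z: "z \<in> span_c A y d"
  shows "p * z \<in> span_c M y d"
proof -
  obtain r where r: "z = (\<Sum>i<d. r i * y i)" "\<forall>i<d. r i \<in> A"
    using z unfolding span_c_def by blast
  then have "p * z = (\<Sum>i<d. (r i * p) * y i)"
    by (simp add: sum_distrib_left algebra_simps)
  moreover have "r i * p \<in> M" if "i < d" for i
    using submodule_c_mult[OF M _ p] r(2) that by blast
  ultimately show ?thesis using span_c_memI[of d "\<lambda>i. r i * p"] by simp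
qed

lemma submodule_c_span_c:
  assumes A: "subring_c A" and M: "submodule_c A M"
  shows "submodule_c A (span_c M y d)"
  unfolding submodule_c_def
proof (intro conjI ballI)
  show "0 \<in> span_c M y d"
    using span_c_memI[of d "\<lambda>_. 0" M y] submodule_c_zero[OF M] by simp
next
  fix u v assume "u \<in> span_c M y d" "v \<in> span_c M y d"
  then obtain r r' where "u = (\<Sum>i<d. r i * y i)" "v = (\<Sum>i<d. r' i * y i)"
      "\<forall>i<d. r i \<in> M" "\<forall>i<d. r' i \<in> M"
    unfolding span_c_def by blast
  then show "u + v \<in> span_c M y d"
    using span_c_memI[of d "\<lambda>i. r i + r' i" M y] submodule_c_add[OF M]
    by (simp add: sum.distrib distrib_right)
next
  fix a u assume "a \<in> A" "u \<in> span_c M y d"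
  then obtain r where "u = (\<Sum>i<d. r i * y i)" "\<forall>i<d. r i \<in> M"
    unfolding span_c_def by blast
  then show "a * u \<in> span_c M y d"
    using span_c_memI[of d "\<lambda>i. a * r i" M y] submodule_c_mult[OF M \<open>a \<in> A\<close>]
    by (simp add: sum_distrib_left mult.assoc)
qed

lemma submodule_c_span_c_self: "subring_c A \<Longrightarrow> submodule_c A (span_c A x d)"
  by (rule submodule_c_span_c[OF _ submodule_c_self])

lemma span_c_gen:
  assumes A: "subring_c A" and "j < d"
  shows "x j \<in> span_c A x d"
proof -
  have "(\<Sum>i<d. (if i = j then 1 else 0) * x i) \<in> span_c A x d"
    by (rule span_c_memI) (auto simp: subring_c_one[OF A] subring_c_zero[OF A])
  moreover have "(\<Sum>i<d. (if i = j then 1 else 0) * x i) = (\<Sum>i<d. if i = j then x i else 0)"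
    by (rule sum.cong) auto
  ultimately show ?thesis using \<open>j < d\<close> by simp
qed

lemma span_c_subset_span_c:
  assumes "subring_c A" and "\<And>i. i < d \<Longrightarrow> x i \<in> span_c A y e"
  shows "span_c A x d \<subseteq> span_c A y e"
  using span_c_subset[OF submodule_c_span_c_self[OF assms(1)] assms(2)] .

lemma span_c_0: "span_c A x 0 = {0}"
  by (simp add: span_c_def)

lemma gen_by_zero:
  assumes "subring_c R"
  shows "gen_by R {0} d"
proof -
  have "span_c R (\<lambda>_. 0) d \<subseteq> {0}" unfolding span_c_def by auto
  moreover have "0 \<in> span_c R (\<lambda>_. 0) d"
    using span_c_memI[of d "\<lambda>_. 0" R "\<lambda>_. 0"] subring_c_zero[OF assms] by simp
  ultimately show ?thesis unfolding gen_by_iff_span_c by blast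
qed

lemma span_c_Suc:
  "span_c A x (Suc d) = {u + r * x d | u r. u \<in> span_c A x d \<and> r \<in> A}"
proof (intro equalityI subsetI)
  fix z assume "z \<in> span_c A x (Suc d)"
  then obtain r where "z = (\<Sum>i<d. r i * x i) + r d * x d" "\<forall>i<Suc d. r i \<in> A"
    unfolding span_c_def by auto
  moreover have "(\<Sum>i<d. r i * x i) \<in> span_c A x d"
    using span_c_memI[of d r A x] \<open>\<forall>i<Suc d. r i \<in> A\<close> by simp
  ultimately show "z \<in> {u + r * x d | u r. u \<in> span_c A x d \<and> r \<in> A}"
    by (intro CollectI exI conjI) auto
next
  fix z assume "z \<in> {u + r * x d | u r. u \<in> span_c A x d \<and> r \<in> A}"
  then obtain r c where "z = (\<Sum>i<d. r i * x i) + c * x d" "\<forall>i<d. r i \<in> A" "c \<in> A"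
    unfolding span_c_def by blast
  moreover have "(\<Sum>i<Suc d. (r(d := c)) i * x i) = (\<Sum>i<d. r i * x i) + c * x d"
    by simp
  moreover have "(\<Sum>i<Suc d. (r(d := c)) i * x i) \<in> span_c A x (Suc d)"
    by (rule span_c_memI) (use \<open>\<forall>i<d. r i \<in> A\<close> \<open>c \<in> A\<close> in \<open>auto simp: less_Suc_eq\<close>)
  ultimately show "z \<in> span_c A x (Suc d)" by simp
qed

section \<open>Nakayama's lemma\<close>

lemma span_c_subset_add_multiples:
  assumes M: "submodule_c A M" "M \<subseteq> A" and N: "submodule_c A N"
    and y: "\<And>l. l < d \<Longrightarrow> y l \<in> {a + r * v | a r. a \<in> N \<and> r \<in> A}"
  shows "span_c M y d \<subseteq> {a + q * v | a q. a \<in> N \<and> q \<in> M}" (is "_ \<subseteq> ?G")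
proof (rule span_c_subsetI)
  have G: "submodule_c A ?G" using submodule_c_add_multiples[OF N M(1)] .
  show "0 \<in> ?G" by (rule submodule_c_zero[OF G])
  show "u + u' \<in> ?G" if "u \<in> ?G" "u' \<in> ?G" for u u' by (rule submodule_c_add[OF G that])
next
  fix l q assume "l < d" "q \<in> M"
  then obtain a r where "a \<in> N" "r \<in> A" "y l = a + r * v" using y by blast
  then have "q * y l = q * a + (r * q) * v" by (simp add: algebra_simps)
  moreover have "q * a \<in> N" "r * q \<in> M"
    using \<open>q \<in> M\<close> M(2) \<open>a \<in> N\<close> \<open>r \<in> A\<close> submodule_c_mult[OF N] submodule_c_mult[OF M(1)] by auto
  ultimately show "q * y l \<in> ?G" by (intro CollectI exI conjI)
qed

text \<open>The hypothesis on M says that M lies in the Jacobson radical of A.\<close>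

lemma nakayama:
  assumes A: "subring_c A" and M: "submodule_c A M" "M \<subseteq> A"
    and units: "\<And>q. q \<in> M \<Longrightarrow> \<exists>w\<in>A. w * (1 - q) = 1"
    and N: "submodule_c A N" and y: "\<forall>i<d. \<exists>a\<in>N. y i - a \<in> span_c M y d"
  shows "\<forall>i<d. y i \<in> N"
  using N y
proof (induction d arbitrary: N)
  case (Suc d)
  define N' where "N' = {a + r * y d | a r. a \<in> N \<and> r \<in> A}"
  have N': "submodule_c A N'"
    unfolding N'_def using submodule_c_add_multiples[OF Suc.prems(1) submodule_c_self[OF A]] .
  have "\<forall>i<d. \<exists>a\<in>N'. y i - a \<in> span_c M y d"
  proof (intro allI impI)
    fix i assume "i < d"
    then obtain a u q where "a \<in> N" "u \<in> span_c M y d" "q \<in> M" "y i - a = u + q * y d"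
      using Suc.prems(2) less_SucI unfolding span_c_Suc by blast
    moreover from this have "a + q * y d \<in> N'" "y i - (a + q * y d) = u"
      using M(2) unfolding N'_def by (auto simp: algebra_simps)
    ultimately show "\<exists>a\<in>N'. y i - a \<in> span_c M y d" by metis
  qed
  then have low: "\<And>i. i < d \<Longrightarrow> y i \<in> N'" using Suc.IH[OF N'] by blast
  obtain a u q where a: "a \<in> N" "u \<in> span_c M y d" "q \<in> M" "y d - a = u + q * y d"
    using Suc.prems(2) lessI unfolding span_c_Suc by blast
  have "span_c M y d \<subseteq> {n + c * y d | n c. n \<in> N \<and> c \<in> M}"
    by (rule span_c_subset_add_multiples[OF M Suc.prems(1)]) (use low in \<open>simp add: N'_def\<close>)
  then obtain n c where nc: "n \<in> N" "c \<in> M" "u = n + c * y d" using a(2) by blast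
  obtain w where w: "w \<in> A" "w * (1 - (c + q)) = 1"
    using units submodule_c_add[OF M(1) nc(2) a(3)] by blast
  have "(1 - (c + q)) * y d = a + n" using a(4) nc(3) by (simp add: algebra_simps)
  then have "y d = w * (a + n)" using w(2) by (metis mult.assoc mult_1)
  then have top: "y d \<in> N"
    using submodule_c_mult[OF Suc.prems(1) w(1)] submodule_c_add[OF Suc.prems(1) a(1) nc(1)] by simp
  have "y i \<in> N" if i: "i < d" for i
  proof -
    obtain a r where "a \<in> N" "r \<in> A" "y i = a + r * y d" using low[OF i] unfolding N'_def by blast
    then show ?thesis using top submodule_c_add[OF Suc.prems(1)] submodule_c_mult[OF Suc.prems(1)] by simp
  qed
  then show ?case using top less_Suc_eq by auto
qed simp

section \<open>Products of ideals and approximation\<close>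

inductive_set ideal_prod_c :: "complex set \<Rightarrow> complex set \<Rightarrow> complex set" for P I where
  mult: "p \<in> P \<Longrightarrow> z \<in> I \<Longrightarrow> p * z \<in> ideal_prod_c P I"
| add: "x \<in> ideal_prod_c P I \<Longrightarrow> y \<in> ideal_prod_c P I \<Longrightarrow> x + y \<in> ideal_prod_c P I"

lemma ideal_prod_c_subset:
  assumes "\<And>x y. x \<in> G \<Longrightarrow> y \<in> G \<Longrightarrow> x + y \<in> G" and "\<And>p z. p \<in> P \<Longrightarrow> z \<in> I \<Longrightarrow> p * z \<in> G"
  shows "ideal_prod_c P I \<subseteq> G"
proof
  fix x assume "x \<in> ideal_prod_c P I"
  then show "x \<in> G" by induction (use assms in auto)
qed

lemma ideal_prod_c_sum:
  assumes "0 \<in> P" "0 \<in> I" and "\<And>i. i \<in> F \<Longrightarrow> f i \<in> ideal_prod_c P I"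
  shows "sum f F \<in> ideal_prod_c P I"
  using assms(3)
proof (induction F rule: infinite_finite_induct)
  case (insert i F)
  then show ?case by (simp add: ideal_prod_c.add)
qed (use ideal_prod_c.mult[OF assms(1,2)] in simp_all)

lemma ideal_prod_c_subset_ideal: "ideal_c R P \<Longrightarrow> I \<subseteq> R \<Longrightarrow> ideal_prod_c P I \<subseteq> P"
  by (rule ideal_prod_c_subset) (auto intro: ideal_c_add ideal_c_mult_right)

text \<open>With E the CRT elements for S, the element \<open>\<Sum>Q\<in>S. E Q * t Q\<close> interpolates t
  modulo each PI.\<close>

lemma crt_approximation:
  assumes R: "subring_c R" and I: "ideal_c R I" and S: "finite S" "\<And>P. P \<in> S \<Longrightarrow> maximal_ideal_c R P"
    and t: "\<And>P. P \<in> S \<Longrightarrow> t P \<in> I"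
  obtains x where "x \<in> I" "\<And>P. P \<in> S \<Longrightarrow> t P - x \<in> ideal_prod_c P I"
proof -
  obtain E where E: "\<And>P. P \<in> S \<Longrightarrow> E P \<in> R" "\<And>P. P \<in> S \<Longrightarrow> 1 - E P \<in> P"
    "\<And>P Q. P \<in> S \<Longrightarrow> Q \<in> S \<Longrightarrow> Q \<noteq> P \<Longrightarrow> E P \<in> Q"
    using maximal_ideals_c_crt[OF R S] by blast
  define x where "x = (\<Sum>Q\<in>S. E Q * t Q)"
  have "x \<in> I"
    unfolding x_def using E(1) t by (intro ideal_c_sum[OF I] ideal_c_mult_left[OF I])
  moreover have "t P - x \<in> ideal_prod_c P I" if P: "P \<in> S" for P
  proof -
    have PI: "ideal_c R P" using maximal_ideal_c_ideal[OF S(2)[OF P]] .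
    have "t P - x = (1 - E P) * t P + (\<Sum>Q\<in>S - {P}. (- E Q) * t Q)"
      unfolding x_def using S(1) P by (simp add: sum.remove algebra_simps sum_negf)
    also have "\<dots> \<in> ideal_prod_c P I"
    proof (rule ideal_prod_c.add)
      show "(1 - E P) * t P \<in> ideal_prod_c P I"
        using E(2) t P by (intro ideal_prod_c.mult)
      have "(- E Q) * t Q \<in> ideal_prod_c P I" if "Q \<in> S - {P}" for Q
      proof (rule ideal_prod_c.mult)
        show "- E Q \<in> P" using that P E(3)[of Q P] ideal_c_uminus[OF R PI] by blast
        show "t Q \<in> I" using that t by blast
      qed
      then show "(\<Sum>Q\<in>S - {P}. (- E Q) * t Q) \<in> ideal_prod_c P I"
        using ideal_c_zero[OF PI] ideal_c_zero[OF I] by (intro ideal_prod_c_sum)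
    qed
    finally show ?thesis .
  qed
  ultimately show thesis using that by blast
qed

lemma crt_approximation_nonzero:
  assumes R: "subring_c R" and I: "ideal_c R I" and S: "finite S" "\<And>P. P \<in> S \<Longrightarrow> maximal_ideal_c R P"
    and t: "\<And>P. P \<in> S \<Longrightarrow> t P \<in> I"
    and n: "n \<in> I" "n \<noteq> 0" "\<And>P. P \<in> S \<Longrightarrow> n \<in> P"
  obtains x where "x \<in> I" "x \<noteq> 0" "\<And>P. P \<in> S \<Longrightarrow> t P - x \<in> ideal_prod_c P I"
proof -
  obtain x where x: "x \<in> I" "\<And>P. P \<in> S \<Longrightarrow> t P - x \<in> ideal_prod_c P I"
    using crt_approximation[OF R I S(1), of t] S(2) t by blast
  show thesis
  proof (cases "x = 0")
    case True
    have "t P - n * n \<in> ideal_prod_c P I" if P: "P \<in> S" for P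
    proof -
      have "- n \<in> P" using ideal_c_uminus[OF R maximal_ideal_c_ideal[OF S(2)[OF P]] n(3)[OF P]] .
      then have "t P - x + (- n) * n \<in> ideal_prod_c P I"
        using x(2)[OF P] n(1) by (intro ideal_prod_c.add ideal_prod_c.mult)
      then show ?thesis using True by simp
    qed
    then show thesis using that[of "n * n"] ideal_c_mult_left[OF I _ n(1)] ideal_c_subset[OF I] n by auto
  qed (use that x in blast)
qed

section \<open>Localization\<close>

lemma locI: "a \<in> X \<Longrightarrow> s \<in> R \<Longrightarrow> s \<notin> P \<Longrightarrow> a / s \<in> loc R P X"
  unfolding loc_def by blast

lemma locE:
  assumes "z \<in> loc R P X"
  obtains a s where "a \<in> X" "s \<in> R" "s \<notin> P" "z = a / s"
  using assms unfolding loc_def by blast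

lemma loc_mono: "X \<subseteq> Y \<Longrightarrow> loc R P X \<subseteq> loc R P Y"
  unfolding loc_def by blast

lemma subset_loc: "subring_c R \<Longrightarrow> maximal_ideal_c R P \<Longrightarrow> X \<subseteq> loc R P X"
  using locI[of _ X 1 R P] subring_c_one maximal_ideal_c_one_notin by fastforce

lemma loc_div:
  assumes R: "subring_c R" and P: "maximal_ideal_c R P"
    and z: "z \<in> loc R P X" and u: "u \<in> R" "u \<notin> P"
  shows "z / u \<in> loc R P X"
proof -
  obtain a s where as: "a \<in> X" "s \<in> R" "s \<notin> P" "z = a / s" using locE[OF z] .
  then have "z / u = a / (s * u)" by simp
  moreover have "s * u \<in> R" "s * u \<notin> P"
    using as u subring_c_mult[OF R] maximal_ideal_c_mult_notin[OF R P] by auto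
  ultimately show ?thesis using locI[OF as(1)] by metis
qed

lemma loc_add:
  assumes R: "subring_c R" and P: "maximal_ideal_c R P"
    and X: "\<And>a b t s. a \<in> X \<Longrightarrow> b \<in> X \<Longrightarrow> s \<in> R \<Longrightarrow> t \<in> R \<Longrightarrow> a * t + b * s \<in> X"
    and z: "z \<in> loc R P X" "z' \<in> loc R P X"
  shows "z + z' \<in> loc R P X"
proof -
  obtain a s b t where ab: "a \<in> X" "s \<in> R" "s \<notin> P" "z = a / s" "b \<in> X" "t \<in> R" "t \<notin> P" "z' = b / t"
    using locE[OF z(1)] locE[OF z(2)] by metis
  have "s \<noteq> 0" "t \<noteq> 0" using ab maximal_ideal_c_nonzero[OF P] by auto
  then have "z + z' = (a * t + b * s) / (s * t)" using ab by (simp add: field_simps)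
  moreover have "s * t \<in> R" "s * t \<notin> P"
    using ab subring_c_mult[OF R] maximal_ideal_c_mult_notin[OF R P] by auto
  ultimately show ?thesis using locI[OF X] ab by metis
qed

lemma loc_mult:
  assumes R: "subring_c R" and P: "maximal_ideal_c R P"
    and X: "\<And>r a. r \<in> R \<Longrightarrow> a \<in> X \<Longrightarrow> r * a \<in> X"
    and z: "z \<in> loc R P R" "z' \<in> loc R P X"
  shows "z * z' \<in> loc R P X"
proof -
  obtain a s b t where ab: "a \<in> R" "s \<in> R" "s \<notin> P" "z = a / s" "b \<in> X" "t \<in> R" "t \<notin> P" "z' = b / t"
    using locE[OF z(1)] locE[OF z(2)] by metis
  then have "z * z' = (a * b) / (s * t)" by simp
  moreover have "s * t \<in> R" "s * t \<notin> P"
    using ab subring_c_mult[OF R] maximal_ideal_c_mult_notin[OF R P] by auto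
  ultimately show ?thesis using locI[OF X] ab by metis
qed

lemma subring_c_loc:
  assumes R: "subring_c R" and P: "maximal_ideal_c R P"
  shows "subring_c (loc R P R)"
proof -
  have add: "a * t + b * s \<in> R" if "a \<in> R" "b \<in> R" "s \<in> R" "t \<in> R" for a b s t
    using that by (intro subring_c_add[OF R] subring_c_mult[OF R])
  have mult: "r * a \<in> R" if "r \<in> R" "a \<in> R" for r a
    using that by (rule subring_c_mult[OF R])
  have "-1 \<in> loc R P R"
    using subset_loc[OF R P] subring_c_uminus[OF R subring_c_one[OF R]] by blast
  then have uminus: "- y \<in> loc R P R" if "y \<in> loc R P R" for y
    using loc_mult[OF R P mult \<open>-1 \<in> loc R P R\<close> that] by simp
  show ?thesis
    unfolding subring_c_def
  proof (intro conjI ballI)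
    show "1 \<in> loc R P R" using subset_loc[OF R P] subring_c_one[OF R] by blast
    fix x y assume xy: "x \<in> loc R P R" "y \<in> loc R P R"
    show "x + y \<in> loc R P R" using loc_add[OF R P add xy] .
    show "x * y \<in> loc R P R" using loc_mult[OF R P mult xy] .
    show "x - y \<in> loc R P R" using loc_add[OF R P add xy(1) uminus[OF xy(2)]] by simp
  qed
qed

lemma submodule_c_loc:
  assumes R: "subring_c R" and P: "maximal_ideal_c R P" and I: "ideal_c R I"
  shows "submodule_c (loc R P R) (loc R P I)"
proof -
  have add: "a * t + b * s \<in> I" if "a \<in> I" "b \<in> I" "s \<in> R" "t \<in> R" for a b s t
    using that by (intro ideal_c_add[OF I] ideal_c_mult_right[OF I])
  have mult: "r * a \<in> I" if "r \<in> R" "a \<in> I" for r a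
    using that by (rule ideal_c_mult_left[OF I])
  show ?thesis
    unfolding submodule_c_def
  proof (intro conjI ballI)
    show "0 \<in> loc R P I" using subset_loc[OF R P] ideal_c_zero[OF I] by blast
    show "x + y \<in> loc R P I" if "x \<in> loc R P I" "y \<in> loc R P I" for x y
      using loc_add[OF R P add that] .
    show "a * x \<in> loc R P I" if "a \<in> loc R P R" "x \<in> loc R P I" for a x
      using loc_mult[OF R P mult that] .
  qed
qed

text \<open>The localization at P is a local ring: \<open>1 - p / s = (s - p) / s\<close> with \<open>s - p \<notin> P\<close>.\<close>

lemma loc_one_minus_invertible:
  assumes R: "subring_c R" and P: "maximal_ideal_c R P" and q: "q \<in> loc R P P"
  shows "\<exists>w\<in>loc R P R. w * (1 - q) = 1"
proof -
  have PI: "ideal_c R P" using maximal_ideal_c_ideal[OF P] .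
  obtain p s where ps: "p \<in> P" "s \<in> R" "s \<notin> P" "q = p / s" using locE[OF q] .
  have "s - p \<notin> P" using ideal_c_add[OF PI _ ps(1), of "s - p"] ps(3) by auto
  moreover have "s - p \<in> R" using subring_c_diff[OF R ps(2)] ideal_c_subset[OF PI] ps(1) by blast
  ultimately have "s / (s - p) \<in> loc R P R" using locI[OF ps(2)] by blast
  moreover have "s / (s - p) * (1 - q) = 1"
    using maximal_ideal_c_nonzero[OF P ps(3)] maximal_ideal_c_nonzero[OF P \<open>s - p \<notin> P\<close>] ps(4)
    by (simp add: field_simps)
  ultimately show ?thesis by blast
qed

lemma span_c_loc_clear_denominators:
  assumes R: "subring_c R" and P: "maximal_ideal_c R P" and z: "z \<in> span_c (loc R P R) x d"
  shows "\<exists>s\<in>R - P. s * z \<in> span_c R x d"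
  using z
proof (induction d arbitrary: z)
  case 0
  then show ?case
    using subring_c_one[OF R] maximal_ideal_c_one_notin[OF P] by (auto simp: span_c_0)
next
  case (Suc d)
  then obtain u c where u: "u \<in> span_c (loc R P R) x d" and c: "c \<in> loc R P R" and z: "z = u + c * x d"
    unfolding span_c_Suc by blast
  obtain s where s: "s \<in> R - P" "s * u \<in> span_c R x d" using Suc.IH[OF u] by blast
  obtain a t where a: "a \<in> R" "t \<in> R" "t \<notin> P" "c = a / t" using locE[OF c] .
  have "t \<noteq> 0" using maximal_ideal_c_nonzero[OF P a(3)] .
  then have "(t * s) * z = t * (s * u) + (s * a) * x d"
    using z a(4) by (simp add: algebra_simps)
  also have "\<dots> \<in> span_c R x (Suc d)"
  proof -
    have "t * (s * u) \<in> span_c R x d"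
      using submodule_c_mult[OF submodule_c_span_c_self[OF R] a(2) s(2)] .
    moreover have "s * a \<in> R" using subring_c_mult[OF R] s(1) a(1) by blast
    ultimately show ?thesis unfolding span_c_Suc by blast
  qed
  finally have "(t * s) * z \<in> span_c R x (Suc d)" .
  moreover have "t * s \<in> R - P"
    using s(1) a(2,3) subring_c_mult[OF R] maximal_ideal_c_mult_notin[OF R P] by simp
  ultimately show ?case by blast
qed

lemma loc_span_c:
  assumes R: "subring_c R" and P: "maximal_ideal_c R P"
  shows "loc R P (span_c R x d) = span_c (loc R P R) x d"
proof (intro equalityI subsetI)
  fix z assume "z \<in> loc R P (span_c R x d)"
  then obtain a s where as: "a \<in> span_c R x d" "s \<in> R" "s \<notin> P" "z = a / s" by (rule locE)
  then obtain r where r: "a = (\<Sum>i<d. r i * x i)" "\<forall>i<d. r i \<in> R" unfolding span_c_def by blast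
  have "z = (\<Sum>i<d. (r i / s) * x i)" using as(4) r(1) by (simp add: sum_divide_distrib)
  moreover have "r i / s \<in> loc R P R" if "i < d" for i using r(2) that locI[OF _ as(2,3)] by blast
  ultimately show "z \<in> span_c (loc R P R) x d" using span_c_memI[of d "\<lambda>i. r i / s"] by simp
next
  fix z assume "z \<in> span_c (loc R P R) x d"
  then obtain s where s: "s \<in> R - P" "s * z \<in> span_c R x d"
    using span_c_loc_clear_denominators[OF R P] by blast
  then have "z = (s * z) / s" using maximal_ideal_c_nonzero[OF P] by simp
  then show "z \<in> loc R P (span_c R x d)" using locI[OF s(2)] s(1) by (metis DiffE)
qed

lemma gen_by_loc:
  assumes R: "subring_c R" and P: "maximal_ideal_c R P" and "gen_by R I d"
  shows "gen_by (loc R P R) (loc R P I) d"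
  using assms(3) loc_span_c[OF R P] unfolding gen_by_iff_span_c by metis

lemma gen_by_loc_generators_in_ideal:
  assumes R: "subring_c R" and P: "maximal_ideal_c R P" and I: "ideal_c R I"
    and "gen_by (loc R P R) (loc R P I) d"
  shows "\<exists>y. (\<forall>i<d. y i \<in> I) \<and> loc R P I \<subseteq> span_c (loc R P R) y d"
proof -
  let ?A = "loc R P R"
  have A: "subring_c ?A" using subring_c_loc[OF R P] .
  obtain w where w: "loc R P I = span_c ?A w d" using assms(4) unfolding gen_by_iff_span_c by blast
  have "\<exists>a s. a \<in> I \<and> s \<in> R \<and> s \<notin> P \<and> w i = a / s" if "i < d" for i
    using span_c_gen[OF A that, of w] w unfolding loc_def by blast
  then obtain y s where ys: "\<And>i. i < d \<Longrightarrow> y i \<in> I \<and> s i \<in> R \<and> s i \<notin> P \<and> w i = y i / s i"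
    by metis
  have "w i \<in> span_c ?A y d" if "i < d" for i
  proof -
    have "w i = (1 / s i) * y i" using ys[OF that] by simp
    moreover have "1 / s i \<in> ?A" using ys[OF that] locI[OF subring_c_one[OF R]] by blast
    ultimately show ?thesis
      using submodule_c_mult[OF submodule_c_span_c_self[OF A]] span_c_gen[OF A that]
      by metis
  qed
  then have "loc R P I \<subseteq> span_c ?A y d" using w span_c_subset_span_c[OF A] by blast
  then show ?thesis using ys by blast
qed

lemma loc_subset_span_c_if_unit:
  assumes R: "subring_c R" and P: "maximal_ideal_c R P" and "i < d" "x i \<in> R" "x i \<notin> P"
  shows "loc R P R \<subseteq> span_c (loc R P R) x d"
proof
  let ?A = "loc R P R"
  have A: "subring_c ?A" using subring_c_loc[OF R P] .
  fix z assume "z \<in> ?A"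
  then have "z / x i \<in> ?A" using loc_div[OF R P _ assms(4,5)] by blast
  moreover have "z = (z / x i) * x i" using maximal_ideal_c_nonzero[OF P assms(5)] by simp
  ultimately show "z \<in> span_c ?A x d"
    using submodule_c_mult[OF submodule_c_span_c_self[OF A]] span_c_gen[OF A \<open>i < d\<close>]
    by metis
qed

lemma loc_subset_span_c_if_congruent:
  assumes R: "subring_c R" and P: "maximal_ideal_c R P" and I: "ideal_c R I"
    and y: "loc R P I \<subseteq> span_c (loc R P R) y d"
    and x: "\<And>i. i < d \<Longrightarrow> x i \<in> I" and cong: "\<And>i. i < d \<Longrightarrow> y i - x i \<in> ideal_prod_c P I"
  shows "loc R P I \<subseteq> span_c (loc R P R) x d"
proof -
  let ?A = "loc R P R" and ?M = "loc R P P"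
  have A: "subring_c ?A" using subring_c_loc[OF R P] .
  have PR: "P \<subseteq> R" using ideal_c_subset[OF maximal_ideal_c_ideal[OF P]] .
  have M: "submodule_c ?A ?M" "?M \<subseteq> ?A"
    using submodule_c_loc[OF R P maximal_ideal_c_ideal[OF P]] loc_mono[OF PR] by auto
  have "ideal_prod_c P I \<subseteq> span_c ?M y d"
  proof (rule ideal_prod_c_subset)
    show "u + v \<in> span_c ?M y d" if "u \<in> span_c ?M y d" "v \<in> span_c ?M y d" for u v
      using submodule_c_add[OF submodule_c_span_c[OF A M(1)] that] .
    show "p * z \<in> span_c ?M y d" if "p \<in> P" "z \<in> I" for p z
      using span_c_mult[OF M(1)] subset_loc[OF R P] y that by blast
  qed
  then have "\<forall>i<d. \<exists>a\<in>span_c ?A x d. y i - a \<in> span_c ?M y d"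
    using span_c_gen[OF A] cong by blast
  then have "\<forall>i<d. y i \<in> span_c ?A x d"
    using nakayama[OF A M loc_one_minus_invertible[OF R P] submodule_c_span_c_self[OF A]]
    by blast
  then show ?thesis using y span_c_subset_span_c[OF A] by blast
qed

lemma span_c_eq_if_locally_spanning:
  assumes R: "subring_c R" and I: "ideal_c R I" and x: "\<And>i. i < d \<Longrightarrow> x i \<in> I"
    and loc: "\<And>P. maximal_ideal_c R P \<Longrightarrow> loc R P I \<subseteq> span_c (loc R P R) x d"
  shows "I = span_c R x d"
proof
  show J: "span_c R x d \<subseteq> I" using span_c_subset[OF ideal_c_submodule_c[OF I] x] .
  have "ideal_c R (span_c R x d)"
    unfolding ideal_c_iff_submodule_c
    using submodule_c_span_c_self[OF R] J ideal_c_subset[OF I] by blast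
  show "I \<subseteq> span_c R x d"
  proof
    fix z assume z: "z \<in> I"
    show "z \<in> span_c R x d"
    proof (rule ideal_c_mem_if_locally_mem[OF R \<open>ideal_c R (span_c R x d)\<close>])
      show "z \<in> R" using z ideal_c_subset[OF I] by blast
      fix P assume P: "maximal_ideal_c R P"
      have "z \<in> span_c (loc R P R) x d" using loc[OF P] subset_loc[OF R P] z by blast
      then show "\<exists>s\<in>R - P. s * z \<in> span_c R x d" by (rule span_c_loc_clear_denominators[OF R P])
    qed
  qed
qed

section \<open>Finiteness of the maximal ideals above a nonzero element\<close>

lemma rat_common_denominator:
  fixes a :: "'a \<Rightarrow> rat"
  assumes "finite F"
  obtains D :: int where "D \<noteq> 0" "\<And>k. k \<in> F \<Longrightarrow> a k * of_int D \<in> \<int>"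
proof
  define den where "den k = snd (quotient_of (a k))" for k
  have den: "den k > 0 \<and> a k * of_int (den k) \<in> \<int>" for k
  proof -
    obtain p q where pq: "quotient_of (a k) = (p, q)" by fastforce
    then have "q > 0" "a k * of_int q = of_int p"
      using quotient_of_denom_pos[OF pq] quotient_of_div[OF pq] by simp_all
    then show ?thesis unfolding den_def pq by simp
  qed
  have "den k \<noteq> 0" for k using den[of k] by simp
  then show "prod den F \<noteq> 0" using assms by simp
  show "a k * of_int (prod den F) \<in> \<int>" if "k \<in> F" for k
  proof -
    have "prod den F = den k * prod den (F - {k})"
      using assms that by (simp add: prod.remove)
    then have "a k * of_int (prod den F) = (a k * of_int (den k)) * of_int (prod den (F - {k}))"
      by (simp add: mult.assoc)
    then show ?thesis using den[of k] Ints_mult Ints_of_int by metis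
  qed
qed

lemma rat_linear_relation:
  fixes v :: "'a \<Rightarrow> complex"
  assumes B: "finite B" "\<forall>x\<in>K. \<exists>c. x = (\<Sum>b\<in>B. of_rat (c b) * b)"
    and T: "finite T" "card B < card T" and v: "v ` T \<subseteq> K"
  obtains a where "\<exists>t\<in>T. a t \<noteq> 0" "(\<Sum>t\<in>T. of_rat (a t) * v t) = 0"
proof (cases "inj_on v T")
  case False
  then obtain t t' where tt': "t \<in> T" "t' \<in> T" "t \<noteq> t'" "v t = v t'"
    unfolding inj_on_def by blast
  define a :: "'a \<Rightarrow> rat" where "a s = (if s = t then 1 else if s = t' then -1 else 0)" for s
  have "(\<Sum>s\<in>T. of_rat (a s) * v s) = (\<Sum>s\<in>T. (if s = t then v s else 0) - (if s = t' then v s else 0))"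
    by (rule sum.cong) (auto simp: a_def tt'(3))
  also have "\<dots> = 0" using tt' T(1) by (simp add: sum_subtractf)
  finally have "(\<Sum>s\<in>T. of_rat (a s) * v s) = 0" .
  moreover have "\<exists>s\<in>T. a s \<noteq> 0" using tt'(1) by (auto simp: a_def)
  ultimately show thesis using that by blast
next
  case True
  interpret q: vector_space "\<lambda>q (x::complex). of_rat q * x"
    unfolding vector_space_def by (simp add: algebra_simps of_rat_add of_rat_mult)
  have "x \<in> q.span B" if x: "x \<in> K" for x
  proof -
    obtain c where c: "x = (\<Sum>b\<in>B. of_rat (c b) * b)" using bspec[OF B(2) x] ..
    have "(\<Sum>b\<in>B. of_rat (c b) * b) \<in> q.span B"
    proof (rule q.span_sum)
      fix b assume "b \<in> B"
      show "of_rat (c b) * b \<in> q.span B" using q.span_scale[OF q.span_base[OF \<open>b \<in> B\<close>]] .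
    qed
    then show ?thesis unfolding c .
  qed
  then have span: "v ` T \<subseteq> q.span B" using v by blast
  have "q.dependent (v ` T)"
  proof (rule ccontr)
    assume "q.independent (v ` T)"
    then have "card (v ` T) \<le> card B" using q.independent_span_bound[OF B(1) _ span] by blast
    then show False using T(2) card_image[OF True] by simp
  qed
  then have "\<exists>u. (\<exists>w\<in>v ` T. u w \<noteq> 0) \<and> (\<Sum>w\<in>v ` T. of_rat (u w) * w) = 0"
    using q.dependent_finite[OF finite_imageI[OF T(1)]] by simp
  then obtain u where u: "\<exists>w\<in>v ` T. u w \<noteq> 0" "(\<Sum>w\<in>v ` T. of_rat (u w) * w) = 0"
    by blast
  show thesis
  proof (rule that[of "u \<circ> v"])
    show "\<exists>t\<in>T. (u \<circ> v) t \<noteq> 0" using u(1) by auto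
    show "(\<Sum>t\<in>T. of_rat ((u \<circ> v) t) * v t) = 0"
      using u(2) unfolding sum.reindex[OF True] by (simp add: comp_def)
  qed
qed

lemma int_linear_relation:
  fixes v :: "'a \<Rightarrow> complex"
  assumes B: "finite B" "\<forall>x\<in>K. \<exists>c. x = (\<Sum>b\<in>B. of_rat (c b) * b)"
    and T: "finite T" "card B < card T" and v: "v ` T \<subseteq> K"
  obtains c :: "'a \<Rightarrow> int" where "\<exists>t\<in>T. c t \<noteq> 0" "(\<Sum>t\<in>T. of_int (c t) * v t) = 0"
proof -
  obtain a where a: "\<exists>t\<in>T. a t \<noteq> 0" "(\<Sum>t\<in>T. of_rat (a t) * v t) = 0"
    using rat_linear_relation[OF B T v] .
  obtain D where D: "D \<noteq> 0" "\<And>t. t \<in> T \<Longrightarrow> a t * of_int D \<in> \<int>"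
    using rat_common_denominator[OF T(1), of a] by blast
  have "\<exists>m. a t * of_int D = of_int m" if "t \<in> T" for t
    using D(2)[OF that] by (metis Ints_cases)
  then obtain c where c: "\<And>t. t \<in> T \<Longrightarrow> a t * of_int D = of_int (c t)"
    by metis
  show thesis
  proof (rule that)
    obtain t where "t \<in> T" "a t \<noteq> 0" using a(1) by blast
    then have "a t * of_int D \<noteq> 0" using D(1) by simp
    then have "c t \<noteq> 0" using c[OF \<open>t \<in> T\<close>] by simp
    then show "\<exists>t\<in>T. c t \<noteq> 0" using \<open>t \<in> T\<close> by blast
    have "(\<Sum>t\<in>T. of_int (c t) * v t) = (\<Sum>t\<in>T. of_int D * (of_rat (a t) * v t))"
    proof (rule sum.cong[OF refl])
      fix t assume "t \<in> T"
      have "(of_int (c t) :: complex) = of_rat (a t * of_int D)" using c[OF \<open>t \<in> T\<close>] by simp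
      then show "of_int (c t) * v t = of_int D * (of_rat (a t) * v t)" by (simp add: of_rat_mult)
    qed
    also have "\<dots> = 0" using a(2) by (simp add: sum_distrib_left[symmetric])
    finally show "(\<Sum>t\<in>T. of_int (c t) * v t) = 0" .
  qed
qed

lemma primitive_int_linear_relation:
  fixes v :: "'a \<Rightarrow> complex" and c :: "'a \<Rightarrow> int"
  assumes "\<exists>t\<in>T. c t \<noteq> 0" and rel: "(\<Sum>t\<in>T. of_int (c t) * v t) = 0"
  obtains c' :: "'a \<Rightarrow> int" where "Gcd (c' ` T) = 1" "(\<Sum>t\<in>T. of_int (c' t) * v t) = 0"
proof
  define g where "g = Gcd (c ` T)"
  have g: "g \<noteq> 0" unfolding g_def using assms(1) by auto
  have c: "c t = g * (c t div g)" if "t \<in> T" for t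
    using that unfolding g_def by simp
  have "of_int g * (\<Sum>t\<in>T. of_int (c t div g) * v t) = (\<Sum>t\<in>T. (of_int (c t) :: complex) * v t)"
    unfolding sum_distrib_left by (rule sum.cong[OF refl]) (subst (2) c, simp_all)
  then show "(\<Sum>t\<in>T. of_int (c t div g) * v t) = 0" using rel g by simp
  let ?G = "Gcd ((\<lambda>t. c t div g) ` T)"
  have "g * ?G dvd c t" if "t \<in> T" for t
    using that by (subst c) simp_all
  then have "g * ?G dvd Gcd (c ` T)" by (intro Gcd_greatest) auto
  then have "g * ?G dvd g * 1" by (simp add: g_def)
  then have "?G dvd 1" using dvd_times_left_cancel_iff[OF g] by blast
  then show "?G = 1" by (metis Gcd_int_greater_eq_0 abs_of_nonneg zdvd1_eq)
qed

lemma maximal_ideal_c_int_dvd: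
  assumes R: "subring_c R" and P: "maximal_ideal_c R P" and p: "prime p"
    and "of_int p \<in> P" "of_int c \<in> P"
  shows "p dvd c"
proof (rule ccontr)
  assume "\<not> p dvd c"
  then have "coprime p c" using prime_imp_coprime[OF p] by blast
  then obtain u w where "u * p + w * c = 1" using bezout_int[of p c] by auto
  then have "(1 :: complex) = of_int u * of_int p + of_int w * of_int c"
    by (metis of_int_1 of_int_add of_int_mult)
  also have "\<dots> \<in> P"
    using assms(4,5) maximal_ideal_c_ideal[OF P] subring_c_of_int[OF R]
    by (intro ideal_c_add ideal_c_mult_left)
  finally show False using maximal_ideal_c_one_notin[OF P] by blast
qed

text \<open>For more than \<open>card B\<close> such ideals, their CRT elements satisfy a primitive integer
  relation, and reducing it modulo each of the ideals shows that p divides every coefficient.\<close>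

lemma card_maximal_ideals_containing_prime:
  assumes R: "subring_c R" and B: "finite B" "\<forall>x\<in>K. \<exists>c. x = (\<Sum>b\<in>B. of_rat (c b) * b)"
    and RK: "R \<subseteq> K" and p: "prime p"
    and T: "finite T" "\<And>P. P \<in> T \<Longrightarrow> maximal_ideal_c R P" "\<And>P. P \<in> T \<Longrightarrow> of_int p \<in> P"
  shows "card T \<le> card B"
proof (rule ccontr)
  assume "\<not> card T \<le> card B"
  obtain E where E: "\<And>P. P \<in> T \<Longrightarrow> E P \<in> R" "\<And>P. P \<in> T \<Longrightarrow> 1 - E P \<in> P"
    "\<And>P Q. P \<in> T \<Longrightarrow> Q \<in> T \<Longrightarrow> Q \<noteq> P \<Longrightarrow> E P \<in> Q"
    using maximal_ideals_c_crt[OF R T(1,2)] by blast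
  have "E ` T \<subseteq> K" using E(1) RK by blast
  then obtain c where "\<exists>P\<in>T. c P \<noteq> 0" "(\<Sum>P\<in>T. of_int (c P) * E P) = 0"
    using int_linear_relation[OF B T(1)] \<open>\<not> card T \<le> card B\<close> by (metis not_le)
  then obtain c where c: "Gcd (c ` T) = 1" "(\<Sum>P\<in>T. of_int (c P) * E P) = 0"
    by (rule primitive_int_linear_relation)
  have "p dvd c P" if P: "P \<in> T" for P
  proof -
    have PI: "ideal_c R P" using maximal_ideal_c_ideal[OF T(2)[OF P]] .
    have "of_int (c P) * E P = - (\<Sum>Q\<in>T - {P}. of_int (c Q) * E Q)"
      using c(2) T(1) P by (simp add: sum.remove eq_neg_iff_add_eq_0)
    also have "\<dots> \<in> P"
      using E(3) P subring_c_of_int[OF R]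
      by (intro ideal_c_uminus[OF R PI] ideal_c_sum[OF PI] ideal_c_mult_left[OF PI]) auto
    finally have "of_int (c P) * E P \<in> P" .
    moreover have "E P \<notin> P"
      using ideal_c_add[OF PI E(2)[OF P], of "E P"] maximal_ideal_c_one_notin[OF T(2)[OF P]] by auto
    ultimately have "of_int (c P) \<in> P"
      using maximal_ideal_c_mult_notin[OF R T(2)[OF P] subring_c_of_int[OF R] _ E(1)[OF P]] by blast
    then show ?thesis using maximal_ideal_c_int_dvd[OF R T(2)[OF P] p T(3)[OF P]] by blast
  qed
  then have "p dvd Gcd (c ` T)" by (intro Gcd_greatest) auto
  then have "is_unit p" using c(1) by simp
  then show False using p not_prime_unit by blast
qed

lemma finite_maximal_ideals_containing_prime:
  assumes R: "subring_c R" and B: "finite B" "\<forall>x\<in>K. \<exists>c. x = (\<Sum>b\<in>B. of_rat (c b) * b)"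
    and RK: "R \<subseteq> K" and p: "prime p"
  shows "finite {P. maximal_ideal_c R P \<and> of_int p \<in> P}"
proof (rule ccontr)
  assume "infinite {P. maximal_ideal_c R P \<and> of_int p \<in> P}"
  then obtain T where "finite T" "card T = Suc (card B)" "T \<subseteq> {P. maximal_ideal_c R P \<and> of_int p \<in> P}"
    using infinite_arbitrarily_large by blast
  then show False using card_maximal_ideals_containing_prime[OF R B RK p, of T] by auto
qed

lemma maximal_ideal_c_prime_factor:
  fixes N :: int
  assumes R: "subring_c R" and P: "maximal_ideal_c R P"
  shows "of_int N \<in> P \<Longrightarrow> N \<noteq> 0 \<Longrightarrow> \<exists>p. prime p \<and> p dvd N \<and> of_int p \<in> P"
proof (induction "nat \<bar>N\<bar>" arbitrary: N rule: less_induct)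
  case less
  have PI: "ideal_c R P" using maximal_ideal_c_ideal[OF P] .
  have "\<not> is_unit N"
  proof
    assume "is_unit N"
    then obtain w where "1 = N * w" by (rule dvdE)
    then have "(1::complex) = of_int w * of_int N" by (metis mult.commute of_int_1 of_int_mult)
    also have "\<dots> \<in> P" using ideal_c_mult_left[OF PI subring_c_of_int[OF R] less.prems(1)] .
    finally show False using maximal_ideal_c_one_notin[OF P] by blast
  qed
  then obtain p where p: "p dvd N" "prime p" using prime_divisor_exists[OF less.prems(2)] by blast
  from p(1) obtain M where M: "N = p * M" by (rule dvdE)
  then have "of_int p * of_int M \<in> P" using less.prems(1) by simp
  then consider "of_int p \<in> P" | "of_int M \<in> P"
    using maximal_ideal_c_mult_notin[OF R P subring_c_of_int[OF R] _ subring_c_of_int[OF R]] by blast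
  then show ?case
  proof cases
    case 2
    have "M \<noteq> 0" using M less.prems(2) by auto
    moreover have "\<bar>p\<bar> > 1" using prime_gt_1_int[OF p(2)] by simp
    ultimately have "nat \<bar>M\<bar> < nat \<bar>N\<bar>" using M by (simp add: abs_mult)
    then show ?thesis using less.hyps[OF _ 2 \<open>M \<noteq> 0\<close>] M by auto
  qed (use p in blast)
qed

text \<open>The powers of b satisfy an integer relation; dividing it by the lowest power of b
  occurring in it leaves a nonzero constant term, which is therefore a multiple of b.\<close>

lemma number_ring_dvd_nonzero_int:
  assumes R: "subring_c R" and B: "finite B" "\<forall>x\<in>K. \<exists>c. x = (\<Sum>b\<in>B. of_rat (c b) * b)"
    and RK: "R \<subseteq> K" and b: "b \<in> R" "b \<noteq> 0"
  obtains N :: int and r where "N \<noteq> 0" "r \<in> R" "of_int N = b * r"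
proof -
  let ?n = "card B"
  have "power b ` {..?n} \<subseteq> K" using subring_c_power[OF R b(1)] RK by blast
  moreover have "card B < card {..?n}" by simp
  ultimately obtain c :: "nat \<Rightarrow> int"
    where c: "\<exists>i\<in>{..?n}. c i \<noteq> 0" "(\<Sum>i\<le>?n. of_int (c i) * b ^ i) = 0"
    by (metis int_linear_relation[OF B finite_atMost])
  obtain i where i: "i \<le> ?n" "c i \<noteq> 0" using c(1) by auto
  define k where "k = (LEAST i. c i \<noteq> 0)"
  have ck: "c k \<noteq> 0" unfolding k_def using i(2) by (rule LeastI)
  have kn: "k \<le> ?n" using Least_le[of "\<lambda>i. c i \<noteq> 0", OF i(2)] i(1) unfolding k_def by linarith
  have low: "c j = 0" if "j < k" for j using not_less_Least[OF that[unfolded k_def]] by simp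
  define s where "s = (\<Sum>i\<in>{k<..?n}. of_int (c i) * b ^ (i - Suc k))"
  have "(\<Sum>i\<in>{k<..?n}. of_int (c i) * b ^ i) = b ^ k * (b * s)"
    unfolding s_def sum_distrib_left
  proof (rule sum.cong[OF refl])
    fix i assume "i \<in> {k<..?n}"
    then have "b ^ i = b ^ k * b ^ Suc (i - Suc k)"
      by (metis Suc_diff_Suc greaterThanAtMost_iff le_add_diff_inverse less_imp_le power_add)
    then show "of_int (c i) * b ^ i = b ^ k * (b * (of_int (c i) * b ^ (i - Suc k)))"
      by (simp add: algebra_simps)
  qed
  then have "b ^ k * (of_int (c k) + b * s) =
      of_int (c k) * b ^ k + (\<Sum>i\<in>{k<..?n}. of_int (c i) * b ^ i)"
    by (simp add: algebra_simps)
  also have "\<dots> = (\<Sum>i\<in>{k..?n}. of_int (c i) * b ^ i)"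
    using kn by (simp add: sum.head)
  also have "\<dots> = (\<Sum>i\<le>?n. of_int (c i) * b ^ i)"
    by (rule sum.mono_neutral_left) (auto simp: low)
  finally have "b ^ k * (of_int (c k) + b * s) = 0" using c(2) by simp
  then have "of_int (c k) = b * (- s)" using b(2) by (simp add: add_eq_0_iff2)
  moreover have "- s \<in> R"
    unfolding s_def
    by (intro subring_c_uminus[OF R] subring_c_sum[OF R] subring_c_mult[OF R] subring_c_of_int[OF R]
        subring_c_power[OF R b(1)])
  ultimately show thesis using that ck by blast
qed

lemma finite_maximal_ideals_containing:
  assumes NR: "number_ring R" and b: "b \<in> R" "b \<noteq> 0"
  shows "finite {P. maximal_ideal_c R P \<and> b \<in> P}"
proof -
  obtain B K where R: "subring_c R" and B: "finite B" "\<forall>x\<in>K. \<exists>c. x = (\<Sum>b\<in>B. of_rat (c b) * b)"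
    and RK: "R \<subseteq> K"
    using NR unfolding number_ring_def number_field_c_def by blast
  obtain N r where N: "N \<noteq> 0" "r \<in> R" "of_int N = b * r"
    using number_ring_dvd_nonzero_int[OF R B RK b] .
  have "{P. maximal_ideal_c R P \<and> b \<in> P}
      \<subseteq> (\<Union>p\<in>{p. prime p \<and> p dvd N}. {P. maximal_ideal_c R P \<and> of_int p \<in> P})"
  proof safe
    fix P assume P: "maximal_ideal_c R P" "b \<in> P"
    then have "of_int N \<in> P" using N ideal_c_mult_right[OF maximal_ideal_c_ideal[OF P(1)]] by simp
    then show "P \<in> (\<Union>p\<in>{p. prime p \<and> p dvd N}. {P. maximal_ideal_c R P \<and> of_int p \<in> P})"
      using maximal_ideal_c_prime_factor[OF R P(1) _ N(1)] P(1) by blast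
  qed
  moreover have "finite {p. prime p \<and> p dvd N}"
    using finite_divisors_int[OF N(1)] by (rule finite_subset[rotated]) auto
  ultimately show ?thesis
    using finite_maximal_ideals_containing_prime[OF R B RK] finite_subset by blast
qed

section \<open>Gluing local generators\<close>

text \<open>\<open>X 0\<close> approximates the first local generators at the finitely many maximal ideals
  containing n; each \<open>X i\<close> with \<open>i > 0\<close> approximates the i-th local generators there and n
  at the finitely many remaining maximal ideals containing \<open>X 0\<close>.\<close>

lemma generators_approximating_local_generators:
  fixes d :: nat
  assumes NR: "number_ring R" and I: "ideal_c R I" and d: "2 \<le> d"
    and n: "n \<in> I" "n \<noteq> 0"
    and Y: "\<And>P i. maximal_ideal_c R P \<Longrightarrow> i < d \<Longrightarrow> Y P i \<in> I"
  obtains X where "\<And>i. i < d \<Longrightarrow> X i \<in> I"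
    "\<And>P i. maximal_ideal_c R P \<Longrightarrow> n \<in> P \<Longrightarrow> i < d \<Longrightarrow> Y P i - X i \<in> ideal_prod_c P I"
    "\<And>P. maximal_ideal_c R P \<Longrightarrow> n \<notin> P \<Longrightarrow> X 0 \<notin> P \<or> X 1 \<notin> P"
proof -
  have R: "subring_c R" using NR unfolding number_ring_def by blast
  have nR: "n \<in> R" using n(1) ideal_c_subset[OF I] by blast
  define S1 where "S1 = {P. maximal_ideal_c R P \<and> n \<in> P}"
  have S1: "finite S1" using finite_maximal_ideals_containing[OF NR nR n(2)] unfolding S1_def .
  have S1_max: "\<And>P. P \<in> S1 \<Longrightarrow> maximal_ideal_c R P" and n_S1: "\<And>P. P \<in> S1 \<Longrightarrow> n \<in> P"
    unfolding S1_def by simp_all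
  have "Y P 0 \<in> I" if "P \<in> S1" for P using Y[OF S1_max[OF that]] d by simp
  then obtain x0 where x0: "x0 \<in> I" "x0 \<noteq> 0" "\<And>P. P \<in> S1 \<Longrightarrow> Y P 0 - x0 \<in> ideal_prod_c P I"
    using crt_approximation_nonzero[OF R I S1, of "\<lambda>P. Y P 0" n] S1_max n n_S1 by blast
  define S2 where "S2 = S1 \<union> {P. maximal_ideal_c R P \<and> x0 \<in> P}"
  have S2: "finite S2" using S1 finite_maximal_ideals_containing[OF NR _ x0(2)] x0(1) ideal_c_subset[OF I]
    unfolding S2_def by auto
  have S2_max: "\<And>P. P \<in> S2 \<Longrightarrow> maximal_ideal_c R P" using S1_max unfolding S2_def by blast
  define t where "t P i = (if n \<in> P then Y P i else n)" for P i
  have "\<exists>x. x \<in> I \<and> (\<forall>P\<in>S2. t P i - x \<in> ideal_prod_c P I)" if "i < d" for i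
  proof -
    have "t P i \<in> I" if "P \<in> S2" for P
      using Y[OF S2_max[OF that] \<open>i < d\<close>] n(1) unfolding t_def by simp
    then obtain x where "x \<in> I" "\<And>P. P \<in> S2 \<Longrightarrow> t P i - x \<in> ideal_prod_c P I"
      using crt_approximation[OF R I S2, of "\<lambda>P. t P i"] S2_max by blast
    then show ?thesis by blast
  qed
  then obtain x where x: "\<And>i. i < d \<Longrightarrow> x i \<in> I \<and> (\<forall>P\<in>S2. t P i - x i \<in> ideal_prod_c P I)"
    by metis
  define X where "X i = (if i = 0 then x0 else x i)" for i
  show thesis
  proof (rule that)
    show "X i \<in> I" if "i < d" for i using x0(1) x[OF that] unfolding X_def by simp
    show "Y P i - X i \<in> ideal_prod_c P I" if P: "maximal_ideal_c R P" "n \<in> P" and "i < d" for P i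
    proof -
      have "P \<in> S1" "P \<in> S2" using P unfolding S2_def S1_def by simp_all
      then show ?thesis using x0(3) x[OF \<open>i < d\<close>] P(2) unfolding X_def t_def by auto
    qed
    show "X 0 \<notin> P \<or> X 1 \<notin> P" if P: "maximal_ideal_c R P" and "n \<notin> P" for P
    proof (cases "X 0 \<in> P")
      case True
      then have "P \<in> S2" using P unfolding X_def S2_def by simp
      then have "n - x 1 \<in> ideal_prod_c P I" using x[of 1] d \<open>n \<notin> P\<close> unfolding t_def by auto
      also have "ideal_prod_c P I \<subseteq> P"
        using ideal_prod_c_subset_ideal[OF maximal_ideal_c_ideal[OF P] ideal_c_subset[OF I]] .
      finally have "n - x 1 \<in> P" .
      then have "x 1 \<notin> P"
        using ideal_c_add[OF maximal_ideal_c_ideal[OF P], of "n - x 1" "x 1"] \<open>n \<notin> P\<close> by auto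
      then show ?thesis unfolding X_def by simp
    qed simp
  qed
qed

lemma gen_by_of_local_generators:
  fixes d :: nat
  assumes NR: "number_ring R" and I: "ideal_c R I" and d: "2 \<le> d"
    and n: "n \<in> I" "n \<noteq> 0"
    and Y: "\<And>P. maximal_ideal_c R P \<Longrightarrow>
      (\<forall>i<d. Y P i \<in> I) \<and> loc R P I \<subseteq> span_c (loc R P R) (Y P) d"
  shows "gen_by R I d"
proof -
  have R: "subring_c R" using NR unfolding number_ring_def by blast
  obtain X where X: "\<And>i. i < d \<Longrightarrow> X i \<in> I"
    "\<And>P i. maximal_ideal_c R P \<Longrightarrow> n \<in> P \<Longrightarrow> i < d \<Longrightarrow> Y P i - X i \<in> ideal_prod_c P I"
    "\<And>P. maximal_ideal_c R P \<Longrightarrow> n \<notin> P \<Longrightarrow> X 0 \<notin> P \<or> X 1 \<notin> P"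
    by (rule generators_approximating_local_generators[OF NR I d n, of Y]) (use Y in blast)+
  have loc_span: "loc R P I \<subseteq> span_c (loc R P R) X d" if P: "maximal_ideal_c R P" for P
  proof (cases "n \<in> P")
    case True
    show ?thesis
      using X(1) X(2)[OF P True] by (rule loc_subset_span_c_if_congruent[OF R P I conjunct2[OF Y[OF P]]])
  next
    case False
    have "0 < d" "1 < d" using d by simp_all
    then obtain j where "j < d" "X j \<notin> P" using X(3)[OF P False] by blast
    then have "loc R P R \<subseteq> span_c (loc R P R) X d"
      using loc_subset_span_c_if_unit[OF R P] X(1) ideal_c_subset[OF I] by blast
    then show ?thesis using loc_mono[OF ideal_c_subset[OF I]] by blast
  qed
  have "I = span_c R X d"
    using X(1) loc_span by (rule span_c_eq_if_locally_spanning[OF R I])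
  then show ?thesis unfolding gen_by_iff_span_c by blast
qed

theorem lemma4p5:
  fixes R I :: "complex set" and d :: nat
  assumes "number_ring R" and "ideal_c R I" and "d \<ge> 2"
  shows "gen_by R I d \<longleftrightarrow>
    (\<forall>P. maximal_ideal_c R P \<longrightarrow> gen_by (loc R P R) (loc R P I) d)"
proof
  have R: "subring_c R" using assms(1) unfolding number_ring_def by blast
  show "gen_by R I d \<Longrightarrow> \<forall>P. maximal_ideal_c R P \<longrightarrow> gen_by (loc R P R) (loc R P I) d"
    using gen_by_loc[OF R] by blast
  assume loc_gen: "\<forall>P. maximal_ideal_c R P \<longrightarrow> gen_by (loc R P R) (loc R P I) d"
  show "gen_by R I d"
  proof (cases "I = {0}")
    case True
    then show ?thesis using gen_by_zero[OF R] by simp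
  next
    case False
    then obtain n where n: "n \<in> I" "n \<noteq> 0" using ideal_c_zero[OF assms(2)] by blast
    have "\<exists>y. (\<forall>i<d. y i \<in> I) \<and> loc R P I \<subseteq> span_c (loc R P R) y d"
      if P: "maximal_ideal_c R P" for P
      using gen_by_loc_generators_in_ideal[OF R P assms(2) loc_gen[rule_format, OF P]] .
    then obtain Y where "\<And>P. maximal_ideal_c R P \<Longrightarrow>
        (\<forall>i<d. Y P i \<in> I) \<and> loc R P I \<subseteq> span_c (loc R P R) (Y P) d"
      by metis
    then show ?thesis using gen_by_of_local_generators[OF assms n] by blast
  qed
qed

end
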